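(* Let $X$ be a non-discrete Tychonoff space with $P$-number $\tau$, and suppose $X$ has a $\tau$-discrete basis of clopen sets. Then for every positive integer $n$, the $P$-number of $X^n$ is $\tau$ and $X^n$ has a $\tau$-discrete basis of clopen sets.
   Context: All spaces are Tychonoff. The $P$-number of a space $Z$ is $|Z|$ if $Z$ is discrete; otherwise it is the largest cardinal $\tau$ such that the intersection of any family of fewer than $\tau$ open subsets of $Z$ is open. A family of subsets of $Z$ is discrete if every point of $Z$ has a neighborhood meeting at most one member of the family. A $\tau$-discrete basis of clopen sets is a base for the topology of the form $\bigcup_{\alpha<\tau}\mathcal B_\alpha$ consisting of clopen sets, with each $\mathcal B_\alpha$ a discrete family. *)

theory Defs
  imports "HOL-Analysis.Analysis" "HOL-Library.Equipollence"
begin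

definition tychonoff_space :: "'a topology \<Rightarrow> bool" where
  "tychonoff_space X \<longleftrightarrow> completely_regular_space X \<and> t1_space X"

definition discrete_space :: "'a topology \<Rightarrow> bool" where
  "discrete_space X \<longleftrightarrow> (\<forall>S. S \<subseteq> topspace X \<longrightarrow> openin X S)"

definition P_closed :: "'a topology \<Rightarrow> 'b set \<Rightarrow> bool" where
  "P_closed X T \<longleftrightarrow>
     (\<forall>\<F>. (\<forall>U\<in>\<F>. openin X U) \<and> \<F> \<prec> T \<longrightarrow> openin X (topspace X \<inter> \<Inter>\<F>))"

text \<open>For a non-discrete space, |T| is the largest
  cardinal with property P_closed; "largest" is expressed as: |T| has the property, and the
  successor cardinal |T|^+ does not, i.e. some family of at most |T| open sets has a
  non-open intersection.\<close>
definition P_number :: "'a topology \<Rightarrow> 'b set \<Rightarrow> bool" where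
  "P_number X T \<longleftrightarrow>
     (if discrete_space X then T \<approx> topspace X
      else P_closed X T \<and>
           (\<exists>\<F>. (\<forall>U\<in>\<F>. openin X U) \<and> \<F> \<lesssim> T \<and> \<not> openin X (topspace X \<inter> \<Inter>\<F>)))"

definition discrete_family :: "'a topology \<Rightarrow> 'a set set \<Rightarrow> bool" where
  "discrete_family X \<B> \<longleftrightarrow>
     (\<forall>x\<in>topspace X. \<exists>U. openin X U \<and> x \<in> U \<and>
        (\<forall>A\<in>\<B>. \<forall>B\<in>\<B>. A \<inter> U \<noteq> {} \<and> B \<inter> U \<noteq> {} \<longrightarrow> A = B))"

definition is_base :: "'a topology \<Rightarrow> 'a set set \<Rightarrow> bool" where
  "is_base X \<B> \<longleftrightarrow> (\<forall>B\<in>\<B>. openin X B) \<and>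
     (\<forall>U x. openin X U \<and> x \<in> U \<longrightarrow> (\<exists>B\<in>\<B>. x \<in> B \<and> B \<subseteq> U))"

text \<open>A |T|-discrete basis of clopen sets: a base \<Union>\<alpha>\<in>T. \<B> \<alpha> of clopen sets, each \<B> \<alpha> discrete
  (the index set T plays the role of the ordinals \<alpha> < \<tau>).\<close>
definition has_discrete_clopen_base :: "'a topology \<Rightarrow> 'b set \<Rightarrow> bool" where
  "has_discrete_clopen_base X T \<longleftrightarrow>
     (\<exists>\<B> :: 'b \<Rightarrow> 'a set set.
        is_base X (\<Union>\<alpha>\<in>T. \<B> \<alpha>) \<and>
        (\<forall>\<alpha>\<in>T. discrete_family X (\<B> \<alpha>)) \<and>
        (\<forall>B\<in>(\<Union>\<alpha>\<in>T. \<B> \<alpha>). openin X B \<and> closedin X B))"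

end

theory Submission
  imports Defs
begin

text \<open>Boxes \<open>U\<^sub>1 \<times> \<dots> \<times> U\<^sub>n\<close> form a base of \<open>X\<^sup>n\<close>, and they make both properties coordinatewise.
  An intersection of fewer than \<open>\<tau>\<close> open subsets of \<open>X\<^sup>n\<close> is open: around each of its points,
  intersect the sides of the chosen boxes coordinate by coordinate.  If the \<open>\<B>\<^sub>\<alpha>\<close> form a
  \<open>\<tau>\<close>-discrete clopen base of \<open>X\<close>, the boxes with \<open>i\<close>-th side in \<open>\<B>\<^bsub>\<alpha>\<^sub>i\<^esub>\<close> form, for each
  \<open>(\<alpha>\<^sub>1, \<dots>, \<alpha>\<^sub>n)\<close>, a discrete clopen family; together they give a base indexed by
  \<open>\<tau>\<^sup>n\<close>, which has cardinality \<open>\<tau>\<close> because \<open>\<tau>\<close> is infinite.  Finally, a family of at most \<open>\<tau>\<close>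
  open sets of \<open>X\<close> with non-open intersection lifts to \<open>X\<^sup>n\<close> via cylinders over one
  coordinate, which are open exactly when their bases are.\<close>

lemma PiE_const_lepoll_infinite:
  assumes "finite I" "infinite T"
  shows "Pi\<^sub>E I (\<lambda>_. T) \<lesssim> T"
  using assms(1)
proof (induction I rule: finite_induct)
  case empty
  obtain a where "a \<in> T"
    using assms(2) by fastforce
  then show ?case
    by (metis PiE_empty_domain insert_absorb singleton_lepoll)
next
  case (insert x I)
  have "Pi\<^sub>E (insert x I) (\<lambda>_. T) \<lesssim> T \<times> Pi\<^sub>E I (\<lambda>_. T)"
    unfolding PiE_insert_eq by (rule image_lepoll)
  also have "\<dots> \<lesssim> T \<times> T"
    using insert.IH by (intro times_lepoll_mono lepoll_refl)
  also have "\<dots> \<lesssim> T"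
    using assms(2)
    by (simp add: eqpoll_imp_lepoll eqpoll_iff_card_of_ordIso card_of_Times_same_infinite)
  finally show ?case .
qed

lemma PiE_UN_distrib:
  "Pi\<^sub>E I (\<lambda>i. \<Union>\<alpha>\<in>T i. F i \<alpha>) = (\<Union>\<alpha>\<in>Pi\<^sub>E I T. Pi\<^sub>E I (\<lambda>i. F i (\<alpha> i)))"
proof
  show "Pi\<^sub>E I (\<lambda>i. \<Union>\<alpha>\<in>T i. F i \<alpha>) \<subseteq> (\<Union>\<alpha>\<in>Pi\<^sub>E I T. Pi\<^sub>E I (\<lambda>i. F i (\<alpha> i)))"
  proof
    fix f assume f: "f \<in> Pi\<^sub>E I (\<lambda>i. \<Union>\<alpha>\<in>T i. F i \<alpha>)"
    then have "\<forall>i\<in>I. \<exists>\<alpha>\<in>T i. f i \<in> F i \<alpha>"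
      by auto
    then obtain a where "\<And>i. i \<in> I \<Longrightarrow> a i \<in> T i \<and> f i \<in> F i (a i)"
      by metis
    then have "restrict a I \<in> Pi\<^sub>E I T" "f \<in> Pi\<^sub>E I (\<lambda>i. F i (restrict a I i))"
      using f by (auto simp: PiE_iff)
    then show "f \<in> (\<Union>\<alpha>\<in>Pi\<^sub>E I T. Pi\<^sub>E I (\<lambda>i. F i (\<alpha> i)))"
      by blast
  qed
qed (auto simp: PiE_iff)

lemma has_discrete_clopen_base_lepoll:
  assumes "has_discrete_clopen_base X S" "S \<lesssim> T"
  shows "has_discrete_clopen_base X T"
proof -
  obtain \<B> where base: "is_base X (\<Union>\<alpha>\<in>S. \<B> \<alpha>)"
    and disc: "\<forall>\<alpha>\<in>S. discrete_family X (\<B> \<alpha>)"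
    and clopen: "\<forall>B\<in>(\<Union>\<alpha>\<in>S. \<B> \<alpha>). openin X B \<and> closedin X B"
    using assms(1) unfolding has_discrete_clopen_base_def by blast
  obtain h where h: "inj_on h S" "h ` S \<subseteq> T"
    using assms(2) unfolding lepoll_def by blast
  \<comment> \<open>indices outside \<open>h ` S\<close> get the empty family, which is trivially discrete\<close>
  define \<B>' where "\<B>' \<beta> = (if \<beta> \<in> h ` S then \<B> (inv_into S h \<beta>) else {})" for \<beta>
  have union: "(\<Union>\<beta>\<in>T. \<B>' \<beta>) = (\<Union>\<alpha>\<in>S. \<B> \<alpha>)"
    using h by (force simp: \<B>'_def inv_into_into)
  have "discrete_family X (\<B>' \<beta>)" if "\<beta> \<in> T" for \<beta>
    using disc inv_into_into[of \<beta> h S] by (auto simp: \<B>'_def discrete_family_def)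
  then show ?thesis
    unfolding has_discrete_clopen_base_def
    by (intro exI[of _ \<B>'] conjI ballI) (use base clopen in \<open>auto simp: union\<close>)
qed

definition boxes :: "'i set \<Rightarrow> ('i \<Rightarrow> 'a set set) \<Rightarrow> ('i \<Rightarrow> 'a) set set" where
  "boxes I \<B> = Pi\<^sub>E I ` Pi\<^sub>E I \<B>"

lemma boxes_UN:
  "boxes I (\<lambda>i. \<Union>\<alpha>\<in>T i. F i \<alpha>) = (\<Union>\<alpha>\<in>Pi\<^sub>E I T. boxes I (\<lambda>i. F i (\<alpha> i)))"
  by (simp add: boxes_def PiE_UN_distrib image_UN)

lemma clopen_boxes:
  assumes "finite I"
    and "\<And>i B. i \<in> I \<Longrightarrow> B \<in> \<B> i \<Longrightarrow> openin (X i) B \<and> closedin (X i) B"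
    and "W \<in> boxes I \<B>"
  shows "openin (product_topology X I) W \<and> closedin (product_topology X I) W"
  using assms by (auto simp: boxes_def openin_PiE_gen closedin_product_topology PiE_iff)

lemma is_base_boxes:
  assumes "finite I" and base: "\<And>i. i \<in> I \<Longrightarrow> is_base (X i) (\<B> i)"
  shows "is_base (product_topology X I) (boxes I \<B>)"
  unfolding is_base_def
proof (intro conjI allI impI ballI)
  show "openin (product_topology X I) W" if "W \<in> boxes I \<B>" for W
    using that assms by (auto simp: boxes_def is_base_def openin_PiE_gen PiE_iff)
  fix U x assume "openin (product_topology X I) U \<and> x \<in> U"
  then obtain V where V: "\<forall>i\<in>I. openin (X i) (V i)" "x \<in> Pi\<^sub>E I V" "Pi\<^sub>E I V \<subseteq> U"
    unfolding openin_product_topology_alt by meson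
  have "\<forall>i\<in>I. \<exists>B\<in>\<B> i. x i \<in> B \<and> B \<subseteq> V i"
    using base V(1,2) unfolding is_base_def by (auto simp: PiE_iff)
  then obtain B where B: "\<And>i. i \<in> I \<Longrightarrow> B i \<in> \<B> i \<and> x i \<in> B i \<and> B i \<subseteq> V i"
    by metis
  show "\<exists>W\<in>boxes I \<B>. x \<in> W \<and> W \<subseteq> U"
  proof (intro bexI conjI)
    show "Pi\<^sub>E I (restrict B I) \<in> boxes I \<B>"
      using B by (auto simp: boxes_def)
    show "x \<in> Pi\<^sub>E I (restrict B I)"
      using B V(2) by (auto simp: PiE_iff)
    have "Pi\<^sub>E I (restrict B I) \<subseteq> Pi\<^sub>E I V"
      using B by (intro PiE_mono) auto
    then show "Pi\<^sub>E I (restrict B I) \<subseteq> U"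
      using V(3) by blast
  qed
qed

lemma discrete_family_boxes:
  assumes "finite I" and disc: "\<And>i. i \<in> I \<Longrightarrow> discrete_family (X i) (\<B> i)"
  shows "discrete_family (product_topology X I) (boxes I \<B>)"
  unfolding discrete_family_def
proof
  fix x assume x: "x \<in> topspace (product_topology X I)"
  have "\<forall>i\<in>I. \<exists>U. openin (X i) U \<and> x i \<in> U \<and>
          (\<forall>A\<in>\<B> i. \<forall>B\<in>\<B> i. A \<inter> U \<noteq> {} \<and> B \<inter> U \<noteq> {} \<longrightarrow> A = B)"
    using disc x unfolding discrete_family_def by (auto simp: PiE_iff)
  then obtain U where U: "\<And>i. i \<in> I \<Longrightarrow> openin (X i) (U i) \<and> x i \<in> U i \<and>
          (\<forall>A\<in>\<B> i. \<forall>B\<in>\<B> i. A \<inter> U i \<noteq> {} \<and> B \<inter> U i \<noteq> {} \<longrightarrow> A = B)"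
    by metis
  show "\<exists>W. openin (product_topology X I) W \<and> x \<in> W \<and>
          (\<forall>A\<in>boxes I \<B>. \<forall>C\<in>boxes I \<B>. A \<inter> W \<noteq> {} \<and> C \<inter> W \<noteq> {} \<longrightarrow> A = C)"
  proof (intro exI conjI ballI impI)
    show "openin (product_topology X I) (Pi\<^sub>E I U)"
      using U assms(1) by (simp add: openin_PiE_gen)
    show "x \<in> Pi\<^sub>E I U"
      using x U by (auto simp: PiE_iff)
    fix A' C' assume "A' \<in> boxes I \<B>" "C' \<in> boxes I \<B>"
      and meet: "A' \<inter> Pi\<^sub>E I U \<noteq> {} \<and> C' \<inter> Pi\<^sub>E I U \<noteq> {}"
    then obtain A C where A: "A \<in> Pi\<^sub>E I \<B>" "A' = Pi\<^sub>E I A"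
      and C: "C \<in> Pi\<^sub>E I \<B>" "C' = Pi\<^sub>E I C"
      unfolding boxes_def by blast
    have "A i = C i" if "i \<in> I" for i
    proof -
      have "A i \<inter> U i \<noteq> {}" "C i \<inter> U i \<noteq> {}"
        using meet that unfolding A(2) C(2) PiE_Int PiE_eq_empty_iff by auto
      then show ?thesis
        using U that A(1) C(1) by blast
    qed
    then show "A' = C'"
      unfolding A(2) C(2) by (rule PiE_cong)
  qed
qed

lemma has_discrete_clopen_base_product:
  assumes "finite I" "\<And>i. i \<in> I \<Longrightarrow> has_discrete_clopen_base (X i) (T i)"
  shows "has_discrete_clopen_base (product_topology X I) (Pi\<^sub>E I T)"
proof -
  have "\<forall>i\<in>I. \<exists>\<B>. is_base (X i) (\<Union>\<alpha>\<in>T i. \<B> \<alpha>) \<and> (\<forall>\<alpha>\<in>T i. discrete_family (X i) (\<B> \<alpha>)) \<and>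
          (\<forall>B\<in>(\<Union>\<alpha>\<in>T i. \<B> \<alpha>). openin (X i) B \<and> closedin (X i) B)"
    using assms(2) unfolding has_discrete_clopen_base_def by blast
  then obtain \<B> where base: "\<And>i. i \<in> I \<Longrightarrow> is_base (X i) (\<Union>\<alpha>\<in>T i. \<B> i \<alpha>)"
    and disc: "\<And>i \<alpha>. i \<in> I \<Longrightarrow> \<alpha> \<in> T i \<Longrightarrow> discrete_family (X i) (\<B> i \<alpha>)"
    and clopen: "\<And>i B. i \<in> I \<Longrightarrow> B \<in> (\<Union>\<alpha>\<in>T i. \<B> i \<alpha>) \<Longrightarrow> openin (X i) B \<and> closedin (X i) B"
    by metis
  have union: "(\<Union>\<alpha>\<in>Pi\<^sub>E I T. boxes I (\<lambda>i. \<B> i (\<alpha> i))) = boxes I (\<lambda>i. \<Union>\<alpha>\<in>T i. \<B> i \<alpha>)"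
    by (simp add: boxes_UN)
  show ?thesis
    unfolding has_discrete_clopen_base_def
  proof (intro exI[of _ "\<lambda>\<alpha>. boxes I (\<lambda>i. \<B> i (\<alpha> i))"] conjI ballI, unfold union)
    show "is_base (product_topology X I) (boxes I (\<lambda>i. \<Union>\<alpha>\<in>T i. \<B> i \<alpha>))"
      using assms(1) base by (rule is_base_boxes)
    show "discrete_family (product_topology X I) (boxes I (\<lambda>i. \<B> i (\<alpha> i)))"
      if "\<alpha> \<in> Pi\<^sub>E I T" for \<alpha>
      using assms(1) disc that by (auto intro: discrete_family_boxes)
    show "openin (product_topology X I) W" "closedin (product_topology X I) W"
      if "W \<in> boxes I (\<lambda>i. \<Union>\<alpha>\<in>T i. \<B> i \<alpha>)" for W
      using clopen_boxes[OF assms(1) clopen that] by simp_all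
  qed
qed

lemma has_discrete_clopen_base_power:
  assumes "finite I" "infinite T" "has_discrete_clopen_base X T"
  shows "has_discrete_clopen_base (product_topology (\<lambda>i. X) I) T"
proof -
  have "has_discrete_clopen_base (product_topology (\<lambda>i. X) I) (Pi\<^sub>E I (\<lambda>_. T))"
    using assms(1,3) by (rule has_discrete_clopen_base_product)
  then show ?thesis
    using PiE_const_lepoll_infinite[OF assms(1,2)] by (rule has_discrete_clopen_base_lepoll)
qed

lemma discrete_space_openin:
  "discrete_space X \<Longrightarrow> S \<subseteq> topspace X \<Longrightarrow> openin X S"
  by (simp add: discrete_space_def)

lemma P_number_infinite:
  assumes "\<not> discrete_space X" "P_number X T"
  shows "infinite T"
proof
  assume "finite T"
  obtain \<F> where \<F>: "\<forall>U\<in>\<F>. openin X U" "\<F> \<lesssim> T" "\<not> openin X (topspace X \<inter> \<Inter>\<F>)"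
    using assms unfolding P_number_def by auto
  have "finite \<F>"
    using \<open>finite T\<close> \<F>(2) unfolding lepoll_def by (meson finite_imageD finite_subset)
  then have "openin X (\<Inter>(insert (topspace X) \<F>))"
    using \<F>(1) by (intro openin_Inter) auto
  then show False
    using \<F>(3) by simp
qed

lemma P_closed_product:
  assumes "finite I" and P: "\<And>i. i \<in> I \<Longrightarrow> P_closed (X i) T"
  shows "P_closed (product_topology X I) T"
  unfolding P_closed_def
proof (intro allI impI)
  fix \<F> assume "(\<forall>U\<in>\<F>. openin (product_topology X I) U) \<and> \<F> \<prec> T"
  then have open_\<F>: "\<forall>U\<in>\<F>. openin (product_topology X I) U" and "\<F> \<prec> T"
    by auto
  show "openin (product_topology X I) (topspace (product_topology X I) \<inter> \<Inter>\<F>)"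
    unfolding openin_product_topology_alt
  proof
    fix x assume x: "x \<in> topspace (product_topology X I) \<inter> \<Inter>\<F>"
    have "\<exists>V. (\<forall>i\<in>I. openin (X i) (V i)) \<and> x \<in> Pi\<^sub>E I V \<and> Pi\<^sub>E I V \<subseteq> U" if "U \<in> \<F>" for U
    proof -
      have "openin (product_topology X I) U" "x \<in> U"
        using open_\<F> x that by auto
      then show ?thesis
        unfolding openin_product_topology_alt by meson
    qed
    then have "\<forall>U\<in>\<F>. \<exists>V. (\<forall>i\<in>I. openin (X i) (V i)) \<and> x \<in> Pi\<^sub>E I V \<and> Pi\<^sub>E I V \<subseteq> U"
      by blast
    from bchoice[OF this] obtain V
      where V: "\<forall>U\<in>\<F>. (\<forall>i\<in>I. openin (X i) (V U i)) \<and> x \<in> Pi\<^sub>E I (V U) \<and> Pi\<^sub>E I (V U) \<subseteq> U"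
      by blast
    define W where "W i = topspace (X i) \<inter> \<Inter>((\<lambda>U. V U i) ` \<F>)" for i
    have "openin (X i) (W i)" if "i \<in> I" for i
    proof -
      have "\<forall>U\<in>(\<lambda>U. V U i) ` \<F>. openin (X i) U"
        using V that by blast
      moreover have "(\<lambda>U. V U i) ` \<F> \<prec> T"
        using image_lepoll \<open>\<F> \<prec> T\<close> by (rule lesspoll_trans1)
      ultimately show ?thesis
        unfolding W_def by (rule P[OF that, unfolded P_closed_def, rule_format, OF conjI])
    qed
    moreover have "x \<in> Pi\<^sub>E I W"
      using x V by (auto simp: W_def PiE_iff)
    moreover have "Pi\<^sub>E I W \<subseteq> topspace (product_topology X I) \<inter> \<Inter>\<F>"
    proof (intro Int_greatest Inter_greatest)
      show "Pi\<^sub>E I W \<subseteq> topspace (product_topology X I)"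
        by (auto simp: W_def PiE_iff)
      fix U assume "U \<in> \<F>"
      then have "Pi\<^sub>E I W \<subseteq> Pi\<^sub>E I (V U)"
        by (intro PiE_mono) (auto simp: W_def)
      also have "\<dots> \<subseteq> U"
        using V \<open>U \<in> \<F>\<close> by blast
      finally show "Pi\<^sub>E I W \<subseteq> U" .
    qed
    moreover have "finite {i \<in> I. W i \<noteq> topspace (X i)}"
      using assms(1) by simp
    ultimately show "\<exists>W. finite {i \<in> I. W i \<noteq> topspace (X i)} \<and> (\<forall>i\<in>I. openin (X i) (W i)) \<and>
                      x \<in> Pi\<^sub>E I W \<and> Pi\<^sub>E I W \<subseteq> topspace (product_topology X I) \<inter> \<Inter>\<F>"
      by blast
  qed
qed

lemma openin_power_cylinder_iff:
  assumes "k \<in> I"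
  shows "openin (product_topology (\<lambda>i. X) I) {f \<in> topspace (product_topology (\<lambda>i. X) I). f k \<in> S}
     \<longleftrightarrow> openin X (topspace X \<inter> S)"
    (is "openin ?Y ?C \<longleftrightarrow> _")
proof
  assume "openin ?Y ?C"
  moreover have "continuous_map X ?Y (\<lambda>x. \<lambda>i\<in>I. x)"
    by (auto simp: continuous_map_componentwise)
  ultimately have "openin X {x \<in> topspace X. (\<lambda>i\<in>I. x) \<in> ?C}"
    using openin_continuous_map_preimage by blast
  moreover have "{x \<in> topspace X. (\<lambda>i\<in>I. x) \<in> ?C} = topspace X \<inter> S"
    using assms by auto
  ultimately show "openin X (topspace X \<inter> S)"
    by simp
next
  assume "openin X (topspace X \<inter> S)"
  then have "openin ?Y {f \<in> topspace ?Y. f k \<in> topspace X \<inter> S}"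
    using assms by (intro openin_continuous_map_preimage[OF continuous_map_product_projection])
  moreover have "{f \<in> topspace ?Y. f k \<in> topspace X \<inter> S} = ?C"
    using assms by auto
  ultimately show "openin ?Y ?C"
    by simp
qed

lemma P_number_power:
  assumes "finite I" "k \<in> I" "\<not> discrete_space X" "P_number X T"
  shows "P_number (product_topology (\<lambda>i. X) I) T"
proof -
  let ?Y = "product_topology (\<lambda>i. X) I"
  let ?C = "\<lambda>S. {f \<in> topspace ?Y. f k \<in> S}"
  have cylinder: "openin ?Y (?C S) \<longleftrightarrow> openin X (topspace X \<inter> S)" for S
    using assms(2) by (rule openin_power_cylinder_iff)
  obtain S where "S \<subseteq> topspace X" "\<not> openin X S"
    using assms(3) unfolding discrete_space_def by blast
  then have "\<not> openin ?Y (?C S)"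
    unfolding cylinder by (simp add: Int_absorb1)
  then have not_discrete: "\<not> discrete_space ?Y"
    using discrete_space_openin[of ?Y "?C S"] by blast
  have closed: "P_closed ?Y T"
    using assms(1) by (rule P_closed_product) (use assms(3,4) in \<open>simp add: P_number_def\<close>)
  obtain \<F> where \<F>: "\<forall>U\<in>\<F>. openin X U" "\<F> \<lesssim> T" "\<not> openin X (topspace X \<inter> \<Inter>\<F>)"
    using assms(3,4) unfolding P_number_def by auto
  have "\<exists>\<G>. (\<forall>U\<in>\<G>. openin ?Y U) \<and> \<G> \<lesssim> T \<and> \<not> openin ?Y (topspace ?Y \<inter> \<Inter>\<G>)"
  proof (intro exI conjI)
    show "\<forall>U\<in>?C ` \<F>. openin ?Y U"
      unfolding ball_simps cylinder using \<F>(1) by (simp add: openin_Int)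
    show "?C ` \<F> \<lesssim> T"
      using image_lepoll \<F>(2) by (rule lepoll_trans)
    have Inter_cylinders: "topspace ?Y \<inter> \<Inter>(?C ` \<F>) = ?C (\<Inter>\<F>)"
      by auto
    show "\<not> openin ?Y (topspace ?Y \<inter> \<Inter>(?C ` \<F>))"
      unfolding Inter_cylinders cylinder by (rule \<F>(3))
  qed
  then show ?thesis
    unfolding P_number_def using not_discrete closed by simp
qed

theorem lemma2p3:
  fixes X :: "'a topology" and T :: "'b set" and n :: nat
  assumes "tychonoff_space X"
    and "\<not> discrete_space X"
    and "P_number X T"
    and "has_discrete_clopen_base X T"
    and "n \<ge> 1"
  shows "P_number (product_topology (\<lambda>i. X) {..<n}) T \<and>
         has_discrete_clopen_base (product_topology (\<lambda>i. X) {..<n}) T"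
proof
  have "0 \<in> {..<n}"
    using assms(5) by simp
  then show "P_number (product_topology (\<lambda>i. X) {..<n}) T"
    using assms(2,3) by (intro P_number_power) auto
  have "infinite T"
    using assms(2,3) by (rule P_number_infinite)
  then show "has_discrete_clopen_base (product_topology (\<lambda>i. X) {..<n}) T"
    using assms(4) by (intro has_discrete_clopen_base_power) auto
qed

end
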